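(* Let $(X,\Sigma)$ be a measurable space, $(\mathcal{E}_t)_{t\ge0}$ a process of pavings, $\mathbf{F}_0^2\subseteq\mathbf{F}\times\mathbf{F}$ a nonempty set of pairs, $\boldsymbol{\mu}=(\mu_t)_{t\ge0}$ a nonincreasing family of monotone measures on $\Sigma$, and $\mathscr{A}=\{\mathsf{A}_t(\cdot|E)\colon E\in\mathcal{E}_t,\,t\ge0\}$ a nonincreasing parametric family of conditional aggregation operators which is $c$-quasi-subadditive on $\mathbf{F}_0^2$ (for some $c\in[1,\infty)$). Then $$\boldsymbol{\mu}_{\mathscr{A}}(f+g,ct)\le\boldsymbol{\mu}_{\mathscr{A}}(f,\lambda t)\vee\boldsymbol{\mu}_{\mathscr{A}}(g,(1-\lambda)t)$$ for every $t\ge0$, every $\lambda\in(0,1)$ and every $(f,g)\in\mathbf{F}_0^2$.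
   Context: $a\vee b=\max\{a,b\}$. $\Sigma^0=\Sigma\setminus\{\emptyset\}$. $\mathbf{F}$ denotes the set of all $\Sigma$-measurable, nonnegative, bounded functions $f\colon X\to[0,\infty)$. A monotone measure is a map $\mu\colon\Sigma\to[0,\infty]$ with $\mu(B)\le\mu(C)$ whenever $B\subseteq C$, $\mu(\emptyset)=0$ and $\mu(X)>0$. For $E\in\Sigma^0$, a conditional aggregation operator (CAO) w.r.t. $E$ is a map $\mathsf{A}(\cdot|E)\colon\mathbf{F}\to[0,\infty]$ such that (C1) $\mathsf{A}(f|E)\le\mathsf{A}(g|E)$ whenever $f(x)\le g(x)$ for all $x\in E$, and (C2) $\mathsf{A}(\mathbf{1}_{X\setminus E}|E)=0$. A process of pavings is a family $(\mathcal{E}_t)_{t\ge0}$ with $\emptyset\in\mathcal{E}_t\subseteq\Sigma$ for all $t$; $\mathcal{E}_t^0=\mathcal{E}_t\setminus\{\emptyset\}$. A parametric family of CAOs (pFCA) $\{\mathsf{A}_t(\cdot|E)\colon E\in\mathcal{E}_t,\,t\ge0\}$ consists of CAOs $\mathsf{A}_t(\cdot|E)$ w.r.t. $E$ for each $t$ and $E\in\mathcal{E}_t^0$, with the convention $\mathsf{A}_t(\cdot|\emptyset)=\infty$. The generalized level measure is $\boldsymbol{\mu}_{\mathscr{A}}(f,t)=\sup\{\mu_t(E)\colon \mathsf{A}_t(f|E)\ge t,\ E\in\mathcal{E}_t\}$ for $t\ge0$. $\boldsymbol{\mu}$ is nonincreasing if $\mu_s(E)\ge\mu_t(E)$ for all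 $E\in\Sigma$ and $s<t$. The pFCA is nonincreasing if $\mathcal{E}_t\subseteq\mathcal{E}_s$ and $\mathsf{A}_s(f|E)\ge\mathsf{A}_t(f|E)$ for all $f\in\mathbf{F}$, $E\in\mathcal{E}_t^0$, $0\le s<t$. It is $c$-quasi-subadditive on $\mathbf{F}_0^2$ if $c\in[1,\infty)$ and $\mathsf{A}_t(f+g|E)\le c(\mathsf{A}_t(f|E)+\mathsf{A}_t(g|E))$ for all $(f,g)\in\mathbf{F}_0^2$, all $E\in\mathcal{E}_t^0$ and all $t>0$. *)

theory Defs
  imports "HOL-Analysis.Analysis"
begin

text \<open>The measurable space (X, Sigma) is represented by a measure space M with
  space M = X and sets M = Sigma (its measure is irrelevant).\<close>

definition bndF :: "'a measure \<Rightarrow> ('a \<Rightarrow> real) set" where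
  "bndF M = {f. f \<in> borel_measurable M \<and> (\<forall>x\<in>space M. 0 \<le> f x)
                 \<and> (\<exists>B. \<forall>x\<in>space M. f x \<le> B)}"

definition monotone_measure :: "'a measure \<Rightarrow> ('a set \<Rightarrow> ennreal) \<Rightarrow> bool" where
  "monotone_measure M \<mu> \<longleftrightarrow>
     (\<forall>B\<in>sets M. \<forall>C\<in>sets M. B \<subseteq> C \<longrightarrow> \<mu> B \<le> \<mu> C) \<and> \<mu> {} = 0 \<and> \<mu> (space M) > 0"

definition CAO :: "'a measure \<Rightarrow> 'a set \<Rightarrow> (('a \<Rightarrow> real) \<Rightarrow> ennreal) \<Rightarrow> bool" where
  "CAO M E A \<longleftrightarrow>
     (\<forall>f\<in>bndF M. \<forall>g\<in>bndF M. (\<forall>x\<in>E. f x \<le> g x) \<longrightarrow> A f \<le> A g) \<and>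
     A (indicator (space M - E)) = 0"

definition paving_process :: "'a measure \<Rightarrow> (real \<Rightarrow> 'a set set) \<Rightarrow> bool" where
  "paving_process M \<E> \<longleftrightarrow> (\<forall>t\<ge>0. {} \<in> \<E> t \<and> \<E> t \<subseteq> sets M)"

definition pFCA :: "'a measure \<Rightarrow> (real \<Rightarrow> 'a set set)
                    \<Rightarrow> (real \<Rightarrow> 'a set \<Rightarrow> ('a \<Rightarrow> real) \<Rightarrow> ennreal) \<Rightarrow> bool" where
  "pFCA M \<E> A \<longleftrightarrow> paving_process M \<E> \<and>
     (\<forall>t\<ge>0. \<forall>E\<in>\<E> t - {{}}. CAO M E (A t E))"

definition Aext :: "(real \<Rightarrow> 'a set \<Rightarrow> ('a \<Rightarrow> real) \<Rightarrow> ennreal)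
                    \<Rightarrow> real \<Rightarrow> 'a set \<Rightarrow> ('a \<Rightarrow> real) \<Rightarrow> ennreal" where
  "Aext A t E f = (if E = {} then \<infinity> else A t E f)"

definition gen_level_measure ::
  "(real \<Rightarrow> 'a set \<Rightarrow> ennreal) \<Rightarrow> (real \<Rightarrow> 'a set set)
   \<Rightarrow> (real \<Rightarrow> 'a set \<Rightarrow> ('a \<Rightarrow> real) \<Rightarrow> ennreal) \<Rightarrow> ('a \<Rightarrow> real) \<Rightarrow> real \<Rightarrow> ennreal" where
  "gen_level_measure \<mu> \<E> A f t =
     Sup {\<mu> t E | E. E \<in> \<E> t \<and> Aext A t E f \<ge> ennreal t}"

definition nonincr_measure_family :: "'a measure \<Rightarrow> (real \<Rightarrow> 'a set \<Rightarrow> ennreal) \<Rightarrow> bool" where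
  "nonincr_measure_family M \<mu> \<longleftrightarrow>
     (\<forall>t\<ge>0. monotone_measure M (\<mu> t)) \<and>
     (\<forall>s t. 0 \<le> s \<and> s < t \<longrightarrow> (\<forall>E\<in>sets M. \<mu> t E \<le> \<mu> s E))"

definition nonincr_pFCA :: "'a measure \<Rightarrow> (real \<Rightarrow> 'a set set)
                    \<Rightarrow> (real \<Rightarrow> 'a set \<Rightarrow> ('a \<Rightarrow> real) \<Rightarrow> ennreal) \<Rightarrow> bool" where
  "nonincr_pFCA M \<E> A \<longleftrightarrow>
     (\<forall>s t. 0 \<le> s \<and> s < t \<longrightarrow> \<E> t \<subseteq> \<E> s \<and>
        (\<forall>f\<in>bndF M. \<forall>E\<in>\<E> t - {{}}. A t E f \<le> A s E f))"

definition quasi_subadditive :: "real \<Rightarrow> (('a \<Rightarrow> real) \<times> ('a \<Rightarrow> real)) set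
                    \<Rightarrow> (real \<Rightarrow> 'a set set)
                    \<Rightarrow> (real \<Rightarrow> 'a set \<Rightarrow> ('a \<Rightarrow> real) \<Rightarrow> ennreal) \<Rightarrow> bool" where
  "quasi_subadditive c F02 \<E> A \<longleftrightarrow> 1 \<le> c \<and>
     (\<forall>(f,g)\<in>F02. \<forall>t>0. \<forall>E\<in>\<E> t - {{}}.
        A t E (\<lambda>x. f x + g x) \<le> ennreal c * (A t E f + A t E g))"

end

theory Submission
  imports Defs
begin

text \<open>A set E contributes \<mu>_{ct}(E) to the level measure of f + g at level c t only if
  A_{ct}(f + g|E) \<ge> c t; quasi-subadditivity then forces A_{ct}(f|E) + A_{ct}(g|E) \<ge> t, so
  A_{ct}(f|E) \<ge> \<lambda> t or A_{ct}(g|E) \<ge> (1 - \<lambda>) t. As pavings, aggregations and measures are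
  nonincreasing in the level and \<lambda> t, (1 - \<lambda>) t \<le> c t, the set E also contributes to the
  level measure of f at level \<lambda> t (or of g at level (1 - \<lambda>) t), with a measure at least
  \<mu>_{ct}(E).\<close>

lemma ennreal_le_add_imp_le_or:
  fixes a b :: ennreal and u v :: real
  assumes "ennreal (u + v) \<le> a + b" and "0 \<le> u" and "0 \<le> v"
  shows "ennreal u \<le> a \<or> ennreal v \<le> b"
proof (rule ccontr)
  assume "\<not> ?thesis"
  then have "a < ennreal u" and "b < ennreal v"
    by (simp_all add: not_le)
  then have "a + b < ennreal (u + v)"
    by (rule add_mono_ennreal)
  with assms(1) show False
    by simp
qed

lemma nonincr_measure_family_mono:
  assumes "nonincr_measure_family M \<mu>" and "0 \<le> s" and "s \<le> r" and "E \<in> sets M"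
  shows "\<mu> r E \<le> \<mu> s E"
  using assms by (cases "s = r") (auto simp: nonincr_measure_family_def)

lemma nonincr_pFCA_paving_mono:
  assumes "nonincr_pFCA M \<E> A" and "0 \<le> s" and "s \<le> r"
  shows "\<E> r \<subseteq> \<E> s"
  using assms by (cases "s = r") (auto simp: nonincr_pFCA_def)

lemma nonincr_pFCA_Aext_mono:
  assumes "nonincr_pFCA M \<E> A" and "0 \<le> s" and "s \<le> r"
    and "h \<in> bndF M" and "E \<in> \<E> r"
  shows "Aext A r E h \<le> Aext A s E h"
  using assms by (cases "s = r") (auto simp: nonincr_pFCA_def Aext_def)

lemma gen_level_measure_upper:
  assumes "E \<in> \<E> t" and "ennreal t \<le> Aext A t E h"
  shows "\<mu> t E \<le> gen_level_measure \<mu> \<E> A h t"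
  unfolding gen_level_measure_def using assms by (blast intro: Sup_upper)

lemma gen_level_measure_upper_at_higher_level:
  assumes "paving_process M \<E>" and "nonincr_measure_family M \<mu>" and "nonincr_pFCA M \<E> A"
    and "0 \<le> s" and "s \<le> r" and "h \<in> bndF M"
    and "E \<in> \<E> r" and "ennreal s \<le> Aext A r E h"
  shows "\<mu> r E \<le> gen_level_measure \<mu> \<E> A h s"
proof -
  have "E \<in> sets M"
    using assms(1,4,5,7) unfolding paving_process_def by (meson order_trans subsetD)
  then have "\<mu> r E \<le> \<mu> s E"
    by (rule nonincr_measure_family_mono[OF assms(2,4,5)])
  also have "\<dots> \<le> gen_level_measure \<mu> \<E> A h s"
  proof (rule gen_level_measure_upper)
    show "E \<in> \<E> s"
      using nonincr_pFCA_paving_mono[OF assms(3-5)] assms(7) by blast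
    show "ennreal s \<le> Aext A s E h"
      using assms(8) nonincr_pFCA_Aext_mono[OF assms(3-7)] by (rule order_trans)
  qed
  finally show ?thesis .
qed

lemma quasi_subadditive_Aext_split:
  assumes "quasi_subadditive c F02 \<E> A" and "(f, g) \<in> F02"
    and "0 \<le> t" and "E \<in> \<E> (c * t)"
    and "ennreal (c * t) \<le> Aext A (c * t) E (\<lambda>x. f x + g x)"
    and "0 \<le> a" and "0 \<le> b" and "a + b \<le> t"
  shows "ennreal a \<le> Aext A (c * t) E f \<or> ennreal b \<le> Aext A (c * t) E g"
proof (cases "t = 0 \<or> E = {}")
  case True
  then have "E = {} \<or> a = 0"
    using assms(6-8) by auto
  then show ?thesis
    by (auto simp: Aext_def)
next
  case False
  then have "0 < t" and "E \<noteq> {}"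
    using assms(3) by auto
  have "1 \<le> c"
    using assms(1) by (simp add: quasi_subadditive_def)
  with \<open>0 < t\<close> have "0 < c * t"
    by simp
  with assms(1,2,4) \<open>E \<noteq> {}\<close>
  have "A (c * t) E (\<lambda>x. f x + g x) \<le> ennreal c * (A (c * t) E f + A (c * t) E g)"
    unfolding quasi_subadditive_def by fastforce
  with assms(5) \<open>E \<noteq> {}\<close>
  have "ennreal c * ennreal t \<le> ennreal c * (A (c * t) E f + A (c * t) E g)"
    using \<open>1 \<le> c\<close> assms(3) by (simp add: Aext_def ennreal_mult)
  then have "ennreal t \<le> A (c * t) E f + A (c * t) E g"
    using \<open>1 \<le> c\<close> by (simp add: ennreal_mult_le_mult_iff)
  then have "ennreal (a + b) \<le> A (c * t) E f + A (c * t) E g"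
    using assms(8) by (meson ennreal_leI order_trans)
  then have "ennreal a \<le> A (c * t) E f \<or> ennreal b \<le> A (c * t) E g"
    using assms(6,7) by (rule ennreal_le_add_imp_le_or)
  then show ?thesis
    using \<open>E \<noteq> {}\<close> by (simp add: Aext_def)
qed

theorem proposition3p14:
  fixes M :: "'a measure" and \<E> :: "real \<Rightarrow> 'a set set"
    and F02 :: "(('a \<Rightarrow> real) \<times> ('a \<Rightarrow> real)) set"
    and \<mu> :: "real \<Rightarrow> 'a set \<Rightarrow> ennreal"
    and A :: "real \<Rightarrow> 'a set \<Rightarrow> ('a \<Rightarrow> real) \<Rightarrow> ennreal"
    and c t lam :: real and f g :: "'a \<Rightarrow> real"
  assumes "F02 \<subseteq> bndF M \<times> bndF M" and "F02 \<noteq> {}"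
    and "nonincr_measure_family M \<mu>"
    and "pFCA M \<E> A" and "nonincr_pFCA M \<E> A"
    and "quasi_subadditive c F02 \<E> A"
    and "0 \<le> t" and "0 < lam" and "lam < 1" and "(f, g) \<in> F02"
  shows "gen_level_measure \<mu> \<E> A (\<lambda>x. f x + g x) (c * t)
         \<le> max (gen_level_measure \<mu> \<E> A f (lam * t))
               (gen_level_measure \<mu> \<E> A g ((1 - lam) * t))"
  unfolding gen_level_measure_def [of _ _ _ "\<lambda>x. f x + g x"]
proof (rule Sup_least, safe)
  fix E assume E: "E \<in> \<E> (c * t)"
    and admissible: "ennreal (c * t) \<le> Aext A (c * t) E (\<lambda>x. f x + g x)"
  have "f \<in> bndF M" and "g \<in> bndF M"
    using assms(1,10) by auto
  have "paving_process M \<E>"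
    using assms(4) by (simp add: pFCA_def)
  have "1 \<le> c"
    using assms(6) by (simp add: quasi_subadditive_def)
  have "0 \<le> lam * t" and "0 \<le> (1 - lam) * t"
    using assms(7-9) by simp_all
  moreover have "lam * t + (1 - lam) * t \<le> t"
    by (simp add: algebra_simps)
  moreover have "lam * t \<le> c * t" and "(1 - lam) * t \<le> c * t"
    using assms(7-9) \<open>1 \<le> c\<close> by (auto intro: mult_right_mono)
  ultimately show "\<mu> (c * t) E \<le> max (gen_level_measure \<mu> \<E> A f (lam * t))
                                      (gen_level_measure \<mu> \<E> A g ((1 - lam) * t))"
    using quasi_subadditive_Aext_split[OF assms(6,10,7) E admissible]
      gen_level_measure_upper_at_higher_level[OF \<open>paving_process M \<E>\<close> assms(3,5) _ _ _ E]
      \<open>f \<in> bndF M\<close> \<open>g \<in> bndF M\<close>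
    by (meson max.coboundedI1 max.coboundedI2)
qed

end
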